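(* Let $(\mathcal{S},\mathcal{T})$ be an $r$-maximal cross-intersecting pair in $\binom{[n]}{\leq r}$. Then $(\phi^{-1}(\mathcal{S}),\phi^{-1}(\mathcal{T}))$ is a stable cross-intersecting pair of families in $\mathcal{I}_{n,k}^{r}$.
   Context: $\Gamma_{n,k}$ is the disjoint union of $n$ copies of $K_k$, with vertices $(i,j)$, $i\in[n]$, $j\in[k]$; $\mathcal{I}_{n,k}^r$ is the set of its independent sets of size $r$. $\binom{[n]}{\le r}$ is the set of subsets of $[n]$ of size at most $r$. $\phi(X)=\{i:(i,1)\in X\}$ for $X\in\mathcal{I}_{n,k}^r$, and $\phi^{-1}(\mathcal{X})=\{A\in\mathcal{I}_{n,k}^r:\phi(A)\in\mathcal{X}\}$. A pair of non-empty families is cross-intersecting if each member of the first meets each member of the second. A cross-intersecting pair $(\mathcal{S},\mathcal{T})$ in $\binom{[n]}{\le r}$ is $r$-maximal if whenever $(\mathcal{V},\mathcal{W})$ is a cross-intersecting pair in $\binom{[n]}{\le r}$ with $\mathcal{S}\subseteq\mathcal{V}$, $\mathcal{T}\subseteq\mathcal{W}$, then $(\mathcal{V},\mathcal{W})=(\mathcal{S},\mathcal{T})$. For $i\in[n],s\in[2,k]$: $P_{i,s}(X)=(X\setminus\{(i,s)\})\cup\{(i,1)\}$ if $(i,s)\in X$, else $X$; $\pi_{i,s}(\mathcal{F})=\{P_{i,s}(X):X\in\mathcal{F}\}\cup\{X\in\mathcal{F}:P_{i,s}(X)\in\mathcal{F}\}$; a family is stable if $\pi_{i,s}(\mathcal{F})=\mathcal{F}$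 for all $i\in[n],s\in[2,k]$, and a pair is stable if both families are. *)

theory Defs
  imports Main
begin

(* Vertices of Gamma_{n,k} are pairs (i,j) with i in [n] = {1..n}, j in [k] = {1..k};
   two distinct vertices are adjacent iff they lie in the same copy (same i). *)
definition indep_sets :: "nat \<Rightarrow> nat \<Rightarrow> nat \<Rightarrow> (nat \<times> nat) set set" where
  "indep_sets n k r = {X. X \<subseteq> {1..n} \<times> {1..k} \<and> card X = r \<and>
      (\<forall>i j j'. (i, j) \<in> X \<longrightarrow> (i, j') \<in> X \<longrightarrow> j = j')}"

definition small_sets :: "nat \<Rightarrow> nat \<Rightarrow> nat set set" where
  "small_sets n r = {A. A \<subseteq> {1..n} \<and> card A \<le> r}"

definition cross_intersecting :: "'a set set \<Rightarrow> 'a set set \<Rightarrow> bool" where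
  "cross_intersecting F G \<longleftrightarrow> F \<noteq> {} \<and> G \<noteq> {} \<and> (\<forall>A\<in>F. \<forall>B\<in>G. A \<inter> B \<noteq> {})"

definition r_maximal :: "nat \<Rightarrow> nat \<Rightarrow> nat set set \<Rightarrow> nat set set \<Rightarrow> bool" where
  "r_maximal n r S T \<longleftrightarrow>
     S \<subseteq> small_sets n r \<and> T \<subseteq> small_sets n r \<and> cross_intersecting S T \<and>
     (\<forall>V W. V \<subseteq> small_sets n r \<and> W \<subseteq> small_sets n r \<and> cross_intersecting V W \<and>
            S \<subseteq> V \<and> T \<subseteq> W \<longrightarrow> V = S \<and> W = T)"

definition phi :: "(nat \<times> nat) set \<Rightarrow> nat set" where
  "phi X = {i. (i, 1) \<in> X}"

definition phi_inv :: "nat \<Rightarrow> nat \<Rightarrow> nat \<Rightarrow> nat set set \<Rightarrow> (nat \<times> nat) set set" where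
  "phi_inv n k r \<X> = {A \<in> indep_sets n k r. phi A \<in> \<X>}"

definition shiftP :: "nat \<Rightarrow> nat \<Rightarrow> (nat \<times> nat) set \<Rightarrow> (nat \<times> nat) set" where
  "shiftP i s X = (if (i, s) \<in> X then (X - {(i, s)}) \<union> {(i, 1)} else X)"

definition shift_pi :: "nat \<Rightarrow> nat \<Rightarrow> (nat \<times> nat) set set \<Rightarrow> (nat \<times> nat) set set" where
  "shift_pi i s F = (shiftP i s ` F) \<union> {X \<in> F. shiftP i s X \<in> F}"

definition stable :: "nat \<Rightarrow> nat \<Rightarrow> (nat \<times> nat) set set \<Rightarrow> bool" where
  "stable n k F \<longleftrightarrow> (\<forall>i\<in>{1..n}. \<forall>s\<in>{2..k}. shift_pi i s F = F)"

end

theory Submission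
  imports Defs
begin

text \<open>Maximality forces both families to be up-closed inside \<open>small_sets n r\<close>: adding a superset
  of a member keeps the pair cross-intersecting.
  A member of \<open>S\<close> can be padded to a set \<open>B\<close> of size \<open>r\<close>, and \<open>B \<times> {1}\<close> lies in the preimage,
  so the preimages are non-empty; \<open>\<phi>\<close> commutes with intersection, so they cross-intersect.
  A shift \<open>P\<^sub>i\<^sub>,\<^sub>s\<close> keeps independence and size and can only enlarge \<open>\<phi> X\<close>, so up-closure makes the
  preimage closed under every shift, hence stable.\<close>

definition up_closed_in :: "'a set set \<Rightarrow> 'a set set \<Rightarrow> bool" where
  "up_closed_in U F \<longleftrightarrow> (\<forall>A\<in>F. \<forall>B\<in>U. A \<subseteq> B \<longrightarrow> B \<in> F)"

lemma cross_intersecting_commute: "cross_intersecting F G \<longleftrightarrow> cross_intersecting G F"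
  unfolding cross_intersecting_def by blast

lemma r_maximal_commute: "r_maximal n r S T \<longleftrightarrow> r_maximal n r T S"
proof -
  have "r_maximal n r T S" if "r_maximal n r S T" for S T
    using that cross_intersecting_commute unfolding r_maximal_def by metis
  then show ?thesis by blast
qed

lemma r_maximal_up_closed_left:
  assumes "r_maximal n r S T"
  shows "up_closed_in (small_sets n r) S"
  unfolding up_closed_in_def
proof (intro ballI impI)
  fix A B assume "A \<in> S" "B \<in> small_sets n r" "A \<subseteq> B"
  have max: "S \<subseteq> small_sets n r" "cross_intersecting S T"
    "\<And>V. V \<subseteq> small_sets n r \<Longrightarrow> cross_intersecting V T \<Longrightarrow> S \<subseteq> V \<Longrightarrow> V = S"
    using assms unfolding r_maximal_def by blast+
  have "cross_intersecting (insert B S) T"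
    using max(2) \<open>A \<in> S\<close> \<open>A \<subseteq> B\<close> unfolding cross_intersecting_def by blast
  moreover have "insert B S \<subseteq> small_sets n r"
    using max(1) \<open>B \<in> small_sets n r\<close> by blast
  ultimately have "insert B S = S" using max(3) by blast
  then show "B \<in> S" by blast
qed

lemma r_maximal_up_closed_right:
  "r_maximal n r S T \<Longrightarrow> up_closed_in (small_sets n r) T"
  using r_maximal_up_closed_left r_maximal_commute by blast

lemma exists_superset_with_card:
  assumes "finite U" "A \<subseteq> U" "card A \<le> m" "m \<le> card U"
  shows "\<exists>B. A \<subseteq> B \<and> B \<subseteq> U \<and> card B = m"
proof -
  have "finite A" using assms(1,2) finite_subset by blast
  have "m - card A \<le> card (U - A)"
    using assms \<open>finite A\<close> by (simp add: card_Diff_subset)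
  then obtain C where C: "C \<subseteq> U - A" "card C = m - card A" "finite C"
    by (rule obtain_subset_with_card_n)
  have "card (A \<union> C) = m"
    using C \<open>finite A\<close> assms(3) by (subst card_Un_disjoint) auto
  then show ?thesis using C assms(2) by (intro exI[of _ "A \<union> C"]) auto
qed

lemma phi_times_one: "phi (B \<times> {1}) = B"
  unfolding phi_def by auto

lemma phi_Int: "phi (X \<inter> Y) = phi X \<inter> phi Y"
  unfolding phi_def by auto

lemma times_one_in_indep_sets:
  assumes "B \<subseteq> {1..n}" "card B = r" "1 \<le> k"
  shows "B \<times> {1} \<in> indep_sets n k r"
  using assms by (auto simp: indep_sets_def card_cartesian_product)

lemma phi_in_small_sets:
  assumes "X \<in> indep_sets n k r"
  shows "phi X \<in> small_sets n r"
proof -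
  have X: "X \<subseteq> {1..n} \<times> {1..k}" "card X = r"
    using assms unfolding indep_sets_def by auto
  have "finite X" using X(1) by (rule finite_subset) simp
  moreover have "phi X \<times> {1} \<subseteq> X" unfolding phi_def by auto
  ultimately have "card (phi X \<times> {1::nat}) \<le> card X" by (rule card_mono)
  moreover have "phi X \<subseteq> {1..n}" using X(1) unfolding phi_def by auto
  ultimately show ?thesis using X(2) by (simp add: small_sets_def card_cartesian_product)
qed

lemma phi_inv_nonempty:
  assumes "up_closed_in (small_sets n r) S" "S \<subseteq> small_sets n r" "S \<noteq> {}"
    and "r \<le> n" "1 \<le> k"
  shows "phi_inv n k r S \<noteq> {}"
proof -
  obtain A where "A \<in> S" using assms(3) by blast
  then have "A \<subseteq> {1..n}" "card A \<le> r" using assms(2) unfolding small_sets_def by auto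
  then obtain B where B: "A \<subseteq> B" "B \<subseteq> {1..n}" "card B = r"
    using exists_superset_with_card[of "{1..n}" A r] assms(4) by auto
  then have "B \<in> S"
    using assms(1) \<open>A \<in> S\<close> unfolding up_closed_in_def small_sets_def by auto
  then have "B \<times> {1} \<in> phi_inv n k r S"
    using times_one_in_indep_sets[OF B(2,3) assms(5)] phi_times_one[of B]
    unfolding phi_inv_def by simp
  then show ?thesis by blast
qed

lemma cross_intersecting_phi_inv:
  assumes "cross_intersecting S T"
    and "phi_inv n k r S \<noteq> {}" "phi_inv n k r T \<noteq> {}"
  shows "cross_intersecting (phi_inv n k r S) (phi_inv n k r T)"
proof -
  have "X \<inter> Y \<noteq> {}" if "X \<in> phi_inv n k r S" "Y \<in> phi_inv n k r T" for X Y
  proof -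
    have "phi X \<inter> phi Y \<noteq> {}"
      using assms(1) that unfolding cross_intersecting_def phi_inv_def by blast
    then show ?thesis unfolding phi_Int[symmetric] phi_def by blast
  qed
  then show ?thesis using assms(2,3) unfolding cross_intersecting_def by blast
qed

lemma shift_pi_eq_if_closed:
  assumes "\<And>X. X \<in> F \<Longrightarrow> shiftP i s X \<in> F"
  shows "shift_pi i s F = F"
  using assms unfolding shift_pi_def by blast

lemma phi_subset_shiftP: "s \<noteq> 1 \<Longrightarrow> phi X \<subseteq> phi (shiftP i s X)"
  unfolding phi_def shiftP_def by auto

lemma shiftP_in_indep_sets:
  assumes "X \<in> indep_sets n k r" "i \<in> {1..n}" "s \<in> {2..k}"
  shows "shiftP i s X \<in> indep_sets n k r"
proof (cases "(i, s) \<in> X")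
  case False
  then show ?thesis using assms(1) unfolding shiftP_def by simp
next
  case True
  have X: "X \<subseteq> {1..n} \<times> {1..k}" "card X = r"
    "\<And>i j j'. (i, j) \<in> X \<Longrightarrow> (i, j') \<in> X \<Longrightarrow> j = j'"
    using assms(1) unfolding indep_sets_def by auto
  have "(i, 1) \<notin> X" using X(3)[OF True] assms(3) by force
  have Y: "shiftP i s X = insert (i, 1) (X - {(i, s)})"
    unfolding shiftP_def using True by auto
  have "finite X" using X(1) finite_subset by blast
  have "card X > 0" using True \<open>finite X\<close> card_gt_0_iff by blast
  then have "card (insert (i, 1) (X - {(i, s)})) = r"
    using True \<open>(i, 1) \<notin> X\<close> \<open>finite X\<close> X(2) by (simp add: card_Diff_singleton)
  moreover have "insert (i, 1) (X - {(i, s)}) \<subseteq> {1..n} \<times> {1..k}"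
    using X(1) assms(2,3) by auto
  moreover have "\<forall>i' j j'. (i', j) \<in> insert (i, 1) (X - {(i, s)}) \<longrightarrow>
      (i', j') \<in> insert (i, 1) (X - {(i, s)}) \<longrightarrow> j = j'"
    using X(3) True by auto
  ultimately show ?thesis unfolding Y indep_sets_def by blast
qed

lemma stable_phi_inv:
  assumes "up_closed_in (small_sets n r) S"
  shows "stable n k (phi_inv n k r S)"
  unfolding stable_def
proof (intro ballI shift_pi_eq_if_closed)
  fix i s X assume "i \<in> {1..n}" and s: "s \<in> {2..k}" and X: "X \<in> phi_inv n k r S"
  then have indep: "shiftP i s X \<in> indep_sets n k r"
    using shiftP_in_indep_sets unfolding phi_inv_def by blast
  have "phi X \<in> S" "phi X \<subseteq> phi (shiftP i s X)"
    using X s phi_subset_shiftP[of s X i] unfolding phi_inv_def by auto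
  then have "phi (shiftP i s X) \<in> S"
    using assms phi_in_small_sets[OF indep] unfolding up_closed_in_def by blast
  with indep show "shiftP i s X \<in> phi_inv n k r S" unfolding phi_inv_def by blast
qed

theorem lemma4p5:
  fixes n k r :: nat and S T :: "nat set set"
  assumes "1 \<le> k" and "r \<le> n"
    and "r_maximal n r S T"
  shows "cross_intersecting (phi_inv n k r S) (phi_inv n k r T)
         \<and> stable n k (phi_inv n k r S) \<and> stable n k (phi_inv n k r T)"
proof -
  have up: "up_closed_in (small_sets n r) S" "up_closed_in (small_sets n r) T"
    using r_maximal_up_closed_left r_maximal_up_closed_right assms(3) by blast+
  have ST: "S \<subseteq> small_sets n r" "T \<subseteq> small_sets n r" "cross_intersecting S T"
    using assms(3) unfolding r_maximal_def by blast+
  then have "S \<noteq> {}" "T \<noteq> {}" unfolding cross_intersecting_def by blast+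
  then have "phi_inv n k r S \<noteq> {}" "phi_inv n k r T \<noteq> {}"
    using phi_inv_nonempty up ST(1,2) assms(1,2) by blast+
  then show ?thesis
    using cross_intersecting_phi_inv ST(3) stable_phi_inv up by blast
qed

end
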